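(* Let $M,N$ be $\mathtt{dBang}$ terms with $M\to_S N$ (one surface step). Then for every resource term $m\sqsubset M$, either $m$ reduces to $\emptyset$ in one surface resource step, or there is a resource term $n\sqsubset N$ such that $m$ reduces to $n$ in one surface resource step.
   Context: \textbf{dBang.} Terms: $M,N ::= x \mid \lambda x.M \mid MN \mid M[N/x] \mid\ !M \mid \mathrm{der}\,M$ ($M[N/x]$ explicit substitution binding $x$); $M\{N/x\}$ capture-avoiding substitution. List contexts $L ::= \square\mid L[N/x]$. Root rules: $L\langle\lambda x.M\rangle N \mapsto L\langle M[N/x]\rangle$; $M[L\langle !N\rangle/x]\mapsto L\langle M\{N/x\}\rangle$; $\mathrm{der}(L\langle !N\rangle)\mapsto L\langle N\rangle$. Surface contexts: $S ::= \square\mid\lambda x.S\mid SM\mid MS\mid S[M/x]\mid M[S/x]\mid\mathrm{der}\,S$ (hole not under $!$); $\to_S$ is the closure of the root rules under surface contexts. \textbf{Resources.} Resource terms: $m,n ::= x\mid\lambda x.m\mid mn\mid m[n/x]\mid\mathrm{der}\,m\mid[m_1,\dots,m_k]$ ($k\ge0$ multisets). Resource list contexts $l::=\square\mid l[n/x]$. Root resource rules (target a resource term or the zero symbol $\emptyset$): $\mathrm{der}(l\langle[m]\rangle)\to l\langle m\rangle$; $\mathrm{der}(l\langle[m_1,\dots,m_k]\rangle)\to\emptyset$ if $k\ne1$; $l\langle\lambda x.m\rangle n\to l\langle m[n/x]\rangle$; $m[l\langle[n_1,\dots,n_k]\rangle/x]\to l\langle m\{n_{\sigma(1)}/x_1,\dots,n_{\sigma(k)}/x_k\}\rangle$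 for every permutation $\sigma$ when $x_1,\dots,x_k$ are exactly the $k$ free occurrences of $x$ in $m$, and $\to\emptyset$ when the number of free occurrences of $x$ in $m$ differs from $k$. Surface resource reduction is the closure under resource surface contexts $s::=\square\mid\lambda x.s\mid s n\mid m s\mid s[n/x]\mid m[s/x]\mid\mathrm{der}\,s$ (not inside bags), a term reducing to $\emptyset$ whenever a subterm in surface position does. \textbf{Approximation.} $x\sqsubset x$; $\lambda x.m\sqsubset\lambda x.M$ if $m\sqsubset M$; $mn\sqsubset MN$ and $m[n/x]\sqsubset M[N/x]$ if $m\sqsubset M,n\sqsubset N$; $\mathrm{der}\,m\sqsubset\mathrm{der}\,M$ if $m\sqsubset M$; $[m_1,\dots,m_k]\sqsubset\ !M$ for any $k\ge0$ if every $m_i\sqsubset M$. *)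

theory Defs
  imports Main "HOL-Library.Multiset"
begin

text \<open>Both \<open>Lam t\<close> and the explicit
substitution \<open>ES t u\<close> (= t[u/x]) bind index 0 in \<open>t\<close>; in \<open>ES t u\<close>
the argument \<open>u\<close> is not under the binder.\<close>

datatype dterm = Var nat | Lam dterm | App dterm dterm | ES dterm dterm
  | Bang dterm | Der dterm

primrec lift :: "nat \<Rightarrow> nat \<Rightarrow> dterm \<Rightarrow> dterm" where
  "lift c n (Var i) = (if i < c then Var i else Var (i + n))"
| "lift c n (Lam t) = Lam (lift (Suc c) n t)"
| "lift c n (App t u) = App (lift c n t) (lift c n u)"
| "lift c n (ES t u) = ES (lift (Suc c) n t) (lift c n u)"
| "lift c n (Bang t) = Bang (lift c n t)"
| "lift c n (Der t) = Der (lift c n t)"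

primrec subst :: "dterm \<Rightarrow> nat \<Rightarrow> dterm \<Rightarrow> dterm" where
  "subst (Var i) k s = (if i < k then Var i else if i = k then s else Var (i - 1))"
| "subst (Lam t) k s = Lam (subst t (Suc k) (lift 0 1 s))"
| "subst (App t u) k s = App (subst t k s) (subst u k s)"
| "subst (ES t u) k s = ES (subst t (Suc k) (lift 0 1 s)) (subst u k s)"
| "subst (Bang t) k s = Bang (subst t k s)"
| "subst (Der t) k s = Der (subst t k s)"

text \<open>List contexts \<open>L = \<box>[N1/x1]...[Nj/xj]\<close> are represented by the list
\<open>[N1,...,Nj]\<close>; the hole lies under \<open>length L\<close> binders.\<close>
definition plug :: "dterm list \<Rightarrow> dterm \<Rightarrow> dterm" where
  "plug L t = foldl ES t L"

inductive root :: "dterm \<Rightarrow> dterm \<Rightarrow> bool" where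
  dB: "root (App (plug L (Lam M)) N) (plug L (ES M (lift 0 (length L) N)))"
| sbang: "root (ES M (plug L (Bang N))) (plug L (subst (lift 1 (length L) M) 0 N))"
| dbang: "root (Der (plug L (Bang N))) (plug L N)"

inductive sstep :: "dterm \<Rightarrow> dterm \<Rightarrow> bool" where
  s_root: "root M N \<Longrightarrow> sstep M N"
| s_lam: "sstep M N \<Longrightarrow> sstep (Lam M) (Lam N)"
| s_appL: "sstep M N \<Longrightarrow> sstep (App M P) (App N P)"
| s_appR: "sstep M N \<Longrightarrow> sstep (App P M) (App P N)"
| s_esL: "sstep M N \<Longrightarrow> sstep (ES M P) (ES N P)"
| s_esR: "sstep M N \<Longrightarrow> sstep (ES P M) (ES P N)"
| s_der: "sstep M N \<Longrightarrow> sstep (Der M) (Der N)"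

datatype rterm = RVar nat | RLam rterm | RApp rterm rterm | RES rterm rterm
  | RDer rterm | RBag "rterm multiset"

primrec rlift :: "nat \<Rightarrow> nat \<Rightarrow> rterm \<Rightarrow> rterm" where
  "rlift c n (RVar i) = (if i < c then RVar i else RVar (i + n))"
| "rlift c n (RLam t) = RLam (rlift (Suc c) n t)"
| "rlift c n (RApp t u) = RApp (rlift c n t) (rlift c n u)"
| "rlift c n (RES t u) = RES (rlift (Suc c) n t) (rlift c n u)"
| "rlift c n (RDer t) = RDer (rlift c n t)"
| "rlift c n (RBag B) = RBag (image_mset (rlift c n) B)"

primrec occ :: "nat \<Rightarrow> rterm \<Rightarrow> nat" where
  "occ k (RVar i) = (if i = k then 1 else 0)"
| "occ k (RLam t) = occ (Suc k) t"
| "occ k (RApp t u) = occ k t + occ k u"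
| "occ k (RES t u) = occ (Suc k) t + occ k u"
| "occ k (RDer t) = occ k t"
| "occ k (RBag B) = sum_mset (image_mset (occ k) B)"

text \<open>Linear substitution: \<open>lsub t k B r\<close> holds iff \<open>r\<close> is obtained from \<open>t\<close>
by replacing its free occurrences of index \<open>k\<close> bijectively by the elements of
the multiset \<open>B\<close> (any distribution, i.e. any permutation \<sigma>), decrementing
indices above \<open>k\<close>. It holds only when the occurrences match \<open>size B\<close>.\<close>
inductive lsub :: "rterm \<Rightarrow> nat \<Rightarrow> rterm multiset \<Rightarrow> rterm \<Rightarrow> bool"
  and lsubs :: "rterm multiset \<Rightarrow> nat \<Rightarrow> rterm multiset \<Rightarrow> rterm multiset \<Rightarrow> bool" where
  l_hit: "lsub (RVar k) k {#s#} s"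
| l_lt: "i < k \<Longrightarrow> lsub (RVar i) k {#} (RVar i)"
| l_gt: "i > k \<Longrightarrow> lsub (RVar i) k {#} (RVar (i - 1))"
| l_lam: "lsub t (Suc k) (image_mset (rlift 0 1) B) r \<Longrightarrow> lsub (RLam t) k B (RLam r)"
| l_app: "lsub t k B1 r1 \<Longrightarrow> lsub u k B2 r2 \<Longrightarrow> lsub (RApp t u) k (B1 + B2) (RApp r1 r2)"
| l_es: "lsub t (Suc k) (image_mset (rlift 0 1) B1) r1 \<Longrightarrow> lsub u k B2 r2 \<Longrightarrow>
         lsub (RES t u) k (B1 + B2) (RES r1 r2)"
| l_der: "lsub t k B r \<Longrightarrow> lsub (RDer t) k B (RDer r)"
| l_bag: "lsubs T k B R \<Longrightarrow> lsub (RBag T) k B (RBag R)"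
| ls_empty: "lsubs {#} k {#} {#}"
| ls_add: "lsubs T k B1 R \<Longrightarrow> lsub t k B2 r \<Longrightarrow> lsubs (add_mset t T) k (B1 + B2) (add_mset r R)"

definition rplug :: "rterm list \<Rightarrow> rterm \<Rightarrow> rterm" where
  "rplug l t = foldl RES t l"

inductive rroot :: "rterm \<Rightarrow> rterm \<Rightarrow> bool" where
  r_der: "rroot (RDer (rplug l (RBag {#m#}))) (rplug l m)"
| r_dB: "rroot (RApp (rplug l (RLam m)) n) (rplug l (RES m (rlift 0 (length l) n)))"
| r_sub: "occ 0 m = size B \<Longrightarrow> lsub (rlift 1 (length l) m) 0 B r \<Longrightarrow>
          rroot (RES m (rplug l (RBag B))) (rplug l r)"

inductive rroot_zero :: "rterm \<Rightarrow> bool" where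
  z_der: "size B \<noteq> 1 \<Longrightarrow> rroot_zero (RDer (rplug l (RBag B)))"
| z_sub: "occ 0 m \<noteq> size B \<Longrightarrow> rroot_zero (RES m (rplug l (RBag B)))"

inductive rstep :: "rterm \<Rightarrow> rterm \<Rightarrow> bool" where
  rs_root: "rroot m n \<Longrightarrow> rstep m n"
| rs_lam: "rstep m n \<Longrightarrow> rstep (RLam m) (RLam n)"
| rs_appL: "rstep m n \<Longrightarrow> rstep (RApp m p) (RApp n p)"
| rs_appR: "rstep m n \<Longrightarrow> rstep (RApp p m) (RApp p n)"
| rs_esL: "rstep m n \<Longrightarrow> rstep (RES m p) (RES n p)"
| rs_esR: "rstep m n \<Longrightarrow> rstep (RES p m) (RES p n)"
| rs_der: "rstep m n \<Longrightarrow> rstep (RDer m) (RDer n)"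

text \<open>Surface resource reduction to \<open>\<emptyset>\<close>.\<close>
inductive rzero :: "rterm \<Rightarrow> bool" where
  rz_root: "rroot_zero m \<Longrightarrow> rzero m"
| rz_lam: "rzero m \<Longrightarrow> rzero (RLam m)"
| rz_appL: "rzero m \<Longrightarrow> rzero (RApp m p)"
| rz_appR: "rzero m \<Longrightarrow> rzero (RApp p m)"
| rz_esL: "rzero m \<Longrightarrow> rzero (RES m p)"
| rz_esR: "rzero m \<Longrightarrow> rzero (RES p m)"
| rz_der: "rzero m \<Longrightarrow> rzero (RDer m)"

inductive approx :: "rterm \<Rightarrow> dterm \<Rightarrow> bool" where
  a_var: "approx (RVar x) (Var x)"
| a_lam: "approx m M \<Longrightarrow> approx (RLam m) (Lam M)"
| a_app: "approx m M \<Longrightarrow> approx n N \<Longrightarrow> approx (RApp m n) (App M N)"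
| a_es: "approx m M \<Longrightarrow> approx n N \<Longrightarrow> approx (RES m n) (ES M N)"
| a_der: "approx m M \<Longrightarrow> approx (RDer m) (Der M)"
| a_bag: "(\<And>m. m \<in># B \<Longrightarrow> approx m M) \<Longrightarrow> approx (RBag B) (Bang M)"

end

theory Submission
  imports Defs
begin

text \<open>Approximation is structural everywhere except under a bang, and surface contexts never
reach under a bang, so it suffices to simulate the three root rules. An approximant of a
redex is a resource redex of the same kind, with a list context approximating the list context
and a bag approximating the banged term. A \<open>dB\<close> step is always simulated. For the other two
rules, either the size of the bag fits (exactly one element for dereliction, as many as there
are occurrences of the bound variable for substitution) and the resource rule fires, or it
yields \<open>\<emptyset>\<close>. In the substitution case the key fact is that linear substitution of approximants
of \<open>N\<close> into an approximant of \<open>M\<close> approximates \<open>M{N/x}\<close>.\<close>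

inductive_cases approx_LamE: "approx m (Lam M)"
inductive_cases approx_AppE: "approx m (App M N)"
inductive_cases approx_ESE: "approx m (ES M N)"
inductive_cases approx_DerE: "approx m (Der M)"
inductive_cases approx_BangE: "approx m (Bang M)"

inductive_cases approx_RVarE: "approx (RVar i) T"
inductive_cases approx_RLamE: "approx (RLam t) T"
inductive_cases approx_RAppE: "approx (RApp t u) T"
inductive_cases approx_RESE: "approx (RES t u) T"
inductive_cases approx_RDerE: "approx (RDer t) T"
inductive_cases approx_RBagE: "approx (RBag B) T"

lemma approx_lift: "approx m M \<Longrightarrow> approx (rlift c n m) (lift c n M)"
proof (induction m M arbitrary: c rule: approx.induct)
  case (a_bag B M)
  then show ?case by (auto intro!: approx.a_bag)
qed (auto intro: approx.intros)

lemma occ_rlift_below: "k < c \<Longrightarrow> occ k (rlift c n m) = occ k m"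
proof (induction m arbitrary: k c)
  case (RBag B)
  then have "image_mset (occ k \<circ> rlift c n) B = image_mset (occ k) B"
    by (intro image_mset_cong) auto
  then show ?case by (simp add: multiset.map_comp)
qed auto

lemma plug_snoc: "plug (L @ [N]) t = ES (plug L t) N"
  by (simp add: plug_def)

lemma rplug_snoc: "rplug (l @ [n]) t = RES (rplug l t) n"
  by (simp add: rplug_def)

lemma approx_plug: "list_all2 approx l L \<Longrightarrow> approx m t \<Longrightarrow> approx (rplug l m) (plug L t)"
  by (induction l L arbitrary: m t rule: list_all2_induct) (simp_all add: plug_def rplug_def approx.a_es)

lemma approx_plugE:
  assumes "approx m (plug L t)"
  obtains l m' where "m = rplug l m'" "approx m' t" "list_all2 approx l L"
  using assms
proof (induction L arbitrary: m thesis rule: rev_induct)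
  case Nil
  then show ?case by (simp add: plug_def rplug_def)
next
  case (snoc N L)
  from snoc.prems(2) obtain m1 n1 where m: "m = RES m1 n1" "approx m1 (plug L t)" "approx n1 N"
    by (auto simp: plug_snoc elim: approx_ESE)
  from snoc.IH[OF _ m(2)] obtain l m' where "m1 = rplug l m'" "approx m' t" "list_all2 approx l L"
    by blast
  with m snoc.prems(1)[of "l @ [n1]" m'] show ?case
    by (simp add: rplug_snoc list_all2_appendI)
qed

lemma multiset_split_size:
  fixes B :: "'a multiset"
  assumes "a \<le> size B"
  obtains B1 B2 where "B = B1 + B2" "size B1 = a"
proof -
  obtain xs where "mset xs = B" using ex_mset by blast
  then have "B = mset (take a xs) + mset (drop a xs)"
    by (simp flip: mset_append)
  with assms \<open>mset xs = B\<close> show thesis by (intro that) auto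
qed

lemma lsubs_exists:
  assumes "\<And>t B. t \<in># T \<Longrightarrow> occ k t = size B \<Longrightarrow> \<exists>r. lsub t k B r"
    and "sum_mset (image_mset (occ k) T) = size B"
  shows "\<exists>R. lsubs T k B R"
  using assms
proof (induction T arbitrary: B)
  case empty
  then show ?case by (auto intro: lsub_lsubs.intros)
next
  case (add t T)
  obtain B1 B2 where B: "B = B1 + B2" "size B1 = sum_mset (image_mset (occ k) T)"
    using multiset_split_size[of "sum_mset (image_mset (occ k) T)" B] add.prems(2) by auto
  with add.prems(2) have "size B2 = occ k t" by simp
  with add.prems(1) obtain r where "lsub t k B2 r" by fastforce
  moreover from add.IH[of B1] add.prems(1) B(2) obtain R where "lsubs T k B1 R" by fastforce
  ultimately show ?case using B by (metis lsub_lsubs.ls_add)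
qed

lemma lsub_exists: "occ k t = size B \<Longrightarrow> \<exists>r. lsub t k B r"
proof (induction t arbitrary: k B)
  case (RVar i)
  show ?case
  proof (cases "i = k")
    case True
    with RVar obtain s where "B = {#s#}" by (metis One_nat_def occ.simps(1) size_1_singleton_mset)
    with True show ?thesis by (auto intro: lsub_lsubs.l_hit)
  next
    case False
    with RVar have "B = {#}" by auto
    with False show ?thesis by (metis lsub_lsubs.l_lt lsub_lsubs.l_gt linorder_neqE_nat)
  qed
next
  case (RLam t)
  then have "occ (Suc k) t = size (image_mset (rlift 0 1) B)" by simp
  with RLam.IH show ?case by (blast intro: lsub_lsubs.l_lam)
next
  case (RApp t u)
  then have "occ k t \<le> size B" by simp
  then obtain B1 B2 where B: "B = B1 + B2" "size B1 = occ k t" by (rule multiset_split_size)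
  with RApp.prems have "size B2 = occ k u" by simp
  with B RApp.IH obtain r1 r2 where "lsub t k B1 r1" "lsub u k B2 r2" by metis
  with B show ?case by (blast intro: lsub_lsubs.l_app)
next
  case (RES t u)
  then have "occ (Suc k) t \<le> size B" by simp
  then obtain B1 B2 where B: "B = B1 + B2" "size B1 = occ (Suc k) t" by (rule multiset_split_size)
  with RES.prems have "size B2 = occ k u" "occ (Suc k) t = size (image_mset (rlift 0 1) B1)"
    by simp_all
  with B RES.IH obtain r1 r2 where "lsub t (Suc k) (image_mset (rlift 0 1) B1) r1" "lsub u k B2 r2"
    by metis
  with B show ?case by (blast intro: lsub_lsubs.l_es)
next
  case (RDer t)
  then show ?case by (metis occ.simps(5) lsub_lsubs.l_der)
next
  case (RBag T)
  then have "\<exists>R. lsubs T k B R" by (intro lsubs_exists) auto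
  then show ?case by (blast intro: lsub_lsubs.l_bag)
qed

lemma approx_lsub:
  shows "lsub t k B r \<Longrightarrow> approx t T \<Longrightarrow> \<forall>b\<in>#B. approx b S \<Longrightarrow> approx r (subst T k S)"
    and "lsubs Ts k B R \<Longrightarrow> \<forall>t\<in>#Ts. approx t T \<Longrightarrow> \<forall>b\<in>#B. approx b S \<Longrightarrow>
           \<forall>r\<in>#R. approx r (subst T k S)"
proof (induction t k B r and Ts k B R arbitrary: T S and T S rule: lsub_lsubs.inducts)
  case (l_lam t k B r)
  from l_lam.prems(1) obtain T' where "T = Lam T'" "approx t T'" by (rule approx_RLamE)
  moreover have "\<forall>b\<in>#image_mset (rlift 0 1) B. approx b (lift 0 1 S)"
    using l_lam.prems(2) by (auto intro: approx_lift)
  ultimately show ?case using l_lam.IH by (auto intro: approx.a_lam)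
next
  case (l_es t k B1 r1 u B2 r2)
  from l_es.prems(1) obtain T1 T2 where "T = ES T1 T2" "approx t T1" "approx u T2"
    by (rule approx_RESE)
  moreover have "\<forall>b\<in>#image_mset (rlift 0 1) B1. approx b (lift 0 1 S)"
    using l_es.prems(2) by (auto intro: approx_lift)
  ultimately show ?case using l_es.IH l_es.prems(2) by (auto intro: approx.a_es)
qed (auto elim!: approx_RVarE approx_RAppE approx_RDerE approx_RBagE intro!: approx.intros)

lemma approx_dB_simulation:
  assumes "approx m (App (plug L (Lam M)) N)"
  shows "\<exists>n. approx n (plug L (ES M (lift 0 (length L) N))) \<and> rstep m n"
proof -
  from assms obtain m1 n1 where m: "m = RApp m1 n1" "approx m1 (plug L (Lam M))" "approx n1 N"
    by (rule approx_AppE)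
  from m(2) obtain l m' where l: "m1 = rplug l m'" "approx m' (Lam M)" "list_all2 approx l L"
    by (rule approx_plugE)
  from l(2) obtain m0 where m0: "m' = RLam m0" "approx m0 M" by (rule approx_LamE)
  have "length l = length L" using l(3) by (rule list_all2_lengthD)
  then have "approx (rplug l (RES m0 (rlift 0 (length l) n1))) (plug L (ES M (lift 0 (length L) N)))"
    using l(3) m0(2) m(3) by (auto intro!: approx_plug approx.a_es approx_lift)
  moreover have "rstep m (rplug l (RES m0 (rlift 0 (length l) n1)))"
    using m l m0 by (auto intro!: rstep.rs_root rroot.r_dB)
  ultimately show ?thesis by blast
qed

lemma approx_sbang_simulation:
  assumes "approx m (ES M (plug L (Bang N)))"
  shows "rzero m \<or> (\<exists>n. approx n (plug L (subst (lift 1 (length L) M) 0 N)) \<and> rstep m n)"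
proof -
  from assms obtain m0 m1 where m: "m = RES m0 m1" "approx m0 M" "approx m1 (plug L (Bang N))"
    by (rule approx_ESE)
  from m(3) obtain l m' where l: "m1 = rplug l m'" "approx m' (Bang N)" "list_all2 approx l L"
    by (rule approx_plugE)
  from l(2) obtain B where B: "m' = RBag B" "\<And>b. b \<in># B \<Longrightarrow> approx b N" by (blast elim: approx_BangE)
  show ?thesis
  proof (cases "occ 0 m0 = size B")
    case True
    then have "occ 0 (rlift 1 (length l) m0) = size B" by (simp add: occ_rlift_below)
    then obtain r where r: "lsub (rlift 1 (length l) m0) 0 B r" using lsub_exists by blast
    have "length l = length L" using l(3) by (rule list_all2_lengthD)
    with r m(2) B(2) have "approx r (subst (lift 1 (length L) M) 0 N)"
      by (auto intro: approx_lsub approx_lift)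
    with l(3) have "approx (rplug l r) (plug L (subst (lift 1 (length L) M) 0 N))"
      by (rule approx_plug)
    moreover have "rstep m (rplug l r)"
      using m l B True r by (auto intro!: rstep.rs_root rroot.r_sub)
    ultimately show ?thesis by blast
  next
    case False
    then show ?thesis using m l B by (auto intro!: rzero.rz_root rroot_zero.z_sub)
  qed
qed

lemma approx_dbang_simulation:
  assumes "approx m (Der (plug L (Bang N)))"
  shows "rzero m \<or> (\<exists>n. approx n (plug L N) \<and> rstep m n)"
proof -
  from assms obtain m1 where m: "m = RDer m1" "approx m1 (plug L (Bang N))" by (rule approx_DerE)
  from m(2) obtain l m' where l: "m1 = rplug l m'" "approx m' (Bang N)" "list_all2 approx l L"
    by (rule approx_plugE)
  from l(2) obtain B where B: "m' = RBag B" "\<And>b. b \<in># B \<Longrightarrow> approx b N" by (blast elim: approx_BangE)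
  show ?thesis
  proof (cases "size B = 1")
    case True
    then obtain b where b: "B = {#b#}" by (blast dest: size_1_singleton_mset)
    have "approx (rplug l b) (plug L N)" using l(3) B(2) b by (auto intro: approx_plug)
    moreover have "rstep m (rplug l b)" using m l B b by (auto intro!: rstep.rs_root rroot.r_der)
    ultimately show ?thesis by blast
  next
    case False
    then show ?thesis using m l B by (auto intro!: rzero.rz_root rroot_zero.z_der)
  qed
qed

lemma approx_root_simulation:
  assumes "root M N" and "approx m M"
  shows "rzero m \<or> (\<exists>n. approx n N \<and> rstep m n)"
  using assms(1)
proof cases
  case dB
  then show ?thesis using assms(2) approx_dB_simulation by blast
next
  case sbang
  then show ?thesis using assms(2) approx_sbang_simulation by blast
next
  case dbang
  then show ?thesis using assms(2) approx_dbang_simulation by blast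
qed

theorem mainTheorem3:
  assumes "sstep M N" and "approx m M"
  shows "rzero m \<or> (\<exists>n. approx n N \<and> rstep m n)"
  using assms
proof (induction M N arbitrary: m rule: sstep.induct)
  case (s_root M N)
  then show ?case by (rule approx_root_simulation)
next
  case s_lam
  then show ?case by (fastforce elim!: approx_LamE intro: approx.intros rstep.intros rzero.intros)
next
  case s_appL
  then show ?case by (fastforce elim!: approx_AppE intro: approx.intros rstep.intros rzero.intros)
next
  case s_appR
  then show ?case by (fastforce elim!: approx_AppE intro: approx.intros rstep.intros rzero.intros)
next
  case s_esL
  then show ?case by (fastforce elim!: approx_ESE intro: approx.intros rstep.intros rzero.intros)
next
  case s_esR
  then show ?case by (fastforce elim!: approx_ESE intro: approx.intros rstep.intros rzero.intros)
next
  case s_der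
  then show ?case by (fastforce elim!: approx_DerE intro: approx.intros rstep.intros rzero.intros)
qed

end
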